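(* Let $f:\{0,1\}^n\to\{-1,1\}$ and put $\eta=\mathbb E_{x,y}\sum_{\alpha,\beta}\hat{f_x}^2(\alpha)\hat{f_y}^2(\beta)\widehat{f_{x+y}}^2(\alpha+\beta)$ and $\delta=\eta/6$. Let $\phi:\{0,1\}^n\to\{0,1\}^n$ be a random map whose values $\phi(x)$, $x\in\{0,1\}^n$, are independent with $\Pr(\phi(x)=\alpha)=\hat{f_x}^2(\alpha)$. Define $$L(\phi)=\Pr_{x,y}\Big(\phi(x)+\phi(y)=\phi(x+y),\ \hat{f_x}^2(\phi(x))\ge\delta,\ \hat{f_y}^2(\phi(y))\ge\delta,\ \widehat{f_{x+y}}^2(\phi(x+y))\ge\delta\Big),$$ with $x,y$ independent uniform. Then $\mathbb E_\phi L(\phi)\ge\eta/2$.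
   Context: $\{0,1\}^n$ is identified with $\mathbb F_2^n$. $\hat h(\alpha)=\mathbb E_z h(z)(-1)^{\langle\alpha,z\rangle}$; $f_y(x)=f(x)f(x+y)$. (By Parseval, $\sum_\alpha\hat{f_x}^2(\alpha)=1$, so the distribution of $\phi(x)$ is well defined.) *)

theory Defs
  imports Complex_Main "HOL-Library.FuncSet"
begin

text \<open>The cube {0,1}^n = F_2^n is represented by subsets of {0..<n} (indicator sets);
  addition is symmetric difference and the inner product is the parity of card (a \<inter> z).\<close>

definition cube :: "nat \<Rightarrow> nat set set" where
  "cube n = Pow {..<n}"

definition vadd :: "nat set \<Rightarrow> nat set \<Rightarrow> nat set" where
  "vadd a b = (a - b) \<union> (b - a)"

definition fourier :: "nat \<Rightarrow> (nat set \<Rightarrow> real) \<Rightarrow> nat set \<Rightarrow> real" where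
  "fourier n h \<alpha> = (\<Sum>z\<in>cube n. h z * (-1) ^ card (\<alpha> \<inter> z)) / 2 ^ n"

definition shiftprod :: "(nat set \<Rightarrow> real) \<Rightarrow> nat set \<Rightarrow> nat set \<Rightarrow> real" where
  "shiftprod f y x = f x * f (vadd x y)"

definition W :: "nat \<Rightarrow> (nat set \<Rightarrow> real) \<Rightarrow> nat set \<Rightarrow> nat set \<Rightarrow> real" where
  "W n f x \<alpha> = (fourier n (shiftprod f x) \<alpha>) ^ 2"

definition eta :: "nat \<Rightarrow> (nat set \<Rightarrow> real) \<Rightarrow> real" where
  "eta n f = (\<Sum>x\<in>cube n. \<Sum>y\<in>cube n. \<Sum>\<alpha>\<in>cube n. \<Sum>\<beta>\<in>cube n.
      W n f x \<alpha> * W n f y \<beta> * W n f (vadd x y) (vadd \<alpha> \<beta>)) / 4 ^ n"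

definition Lphi :: "nat \<Rightarrow> (nat set \<Rightarrow> real) \<Rightarrow> real \<Rightarrow> (nat set \<Rightarrow> nat set) \<Rightarrow> real" where
  "Lphi n f \<delta> \<phi> = real (card {(x, y). x \<in> cube n \<and> y \<in> cube n \<and>
      vadd (\<phi> x) (\<phi> y) = \<phi> (vadd x y) \<and>
      W n f x (\<phi> x) \<ge> \<delta> \<and> W n f y (\<phi> y) \<ge> \<delta> \<and> W n f (vadd x y) (\<phi> (vadd x y)) \<ge> \<delta>})
      / 4 ^ n"

text \<open>Expectation over the random map \<phi> with independent values, Pr(\<phi> x = \<alpha>) = W n f x \<alpha>.\<close>
definition ELphi :: "nat \<Rightarrow> (nat set \<Rightarrow> real) \<Rightarrow> real \<Rightarrow> real" where
  "ELphi n f \<delta> = (\<Sum>\<phi>\<in>(cube n \<rightarrow>\<^sub>E cube n).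
      (\<Prod>x\<in>cube n. W n f x (\<phi> x)) * Lphi n f \<delta> \<phi>)"

end

theory Submission
  imports Defs
begin

text \<open>Expanding \<open>L(\<phi>)\<close> over the values \<open>\<alpha> = \<phi>(x)\<close>, \<open>\<beta> = \<phi>(y)\<close> writes \<open>E L(\<phi>)\<close> as the
  average over \<open>x, y, \<alpha>, \<beta>\<close> of the indicator that the triple is heavy times
  \<open>Pr(\<phi>(x) = \<alpha>, \<phi>(y) = \<beta>, \<phi>(x+y) = \<alpha>+\<beta>)\<close>. By independence this probability is at least
  \<open>W x \<alpha> * W y \<beta> * W (x+y) (\<alpha>+\<beta>)\<close>; when \<open>x, y, x+y\<close> are not distinct this still holds,
  because \<open>W 0\<close> is the point mass at \<open>0\<close> and \<open>W \<le> 1\<close>. Discarding the triples that are not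
  heavy costs at most \<open>\<delta>\<close> times three marginal sums of products of two \<open>W\<close>'s, each equal
  to 1 by Parseval, so \<open>E L(\<phi>) \<ge> \<eta> - 3\<delta> = \<eta>/2\<close>.\<close>

lemma finite_cube [simp]: "finite (cube n)"
  by (simp add: cube_def)

lemma card_cube: "card (cube n) = 2 ^ n"
  by (simp add: cube_def card_Pow)

lemma vadd_in_cube [simp]: "a \<in> cube n \<Longrightarrow> b \<in> cube n \<Longrightarrow> vadd a b \<in> cube n"
  by (auto simp: cube_def vadd_def)

lemma vadd_empty_left [simp]: "vadd {} a = a"
  by (simp add: vadd_def)

lemma vadd_empty_right [simp]: "vadd a {} = a"
  by (simp add: vadd_def)

lemma vadd_self [simp]: "vadd a a = {}"
  by (simp add: vadd_def)

lemma vadd_commute: "vadd a b = vadd b a"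
  by (auto simp: vadd_def)

lemma vadd_vadd_cancel [simp]: "vadd (vadd a b) b = a"
  by (auto simp: vadd_def)

lemma vadd_eq_right_iff [simp]: "vadd a b = b \<longleftrightarrow> a = {}"
  by (auto simp: vadd_def)

lemma left_eq_vadd_iff [simp]: "a = vadd a b \<longleftrightarrow> b = {}"
  by (auto simp: vadd_def)

lemma right_eq_vadd_iff [simp]: "b = vadd a b \<longleftrightarrow> a = {}"
  by (auto simp: vadd_def)

lemma vadd_eq_empty_iff [simp]: "vadd a b = {} \<longleftrightarrow> a = b"
  by (auto simp: vadd_def)

lemma sum_cube_vadd_shift:
  assumes "\<beta> \<in> cube n"
  shows "(\<Sum>\<alpha>\<in>cube n. g (vadd \<alpha> \<beta>)) = (\<Sum>\<alpha>\<in>cube n. g \<alpha>)"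
  by (rule sum.reindex_bij_witness[where i="\<lambda>a. vadd a \<beta>" and j="\<lambda>a. vadd a \<beta>"])
     (auto simp: assms)

lemma sum_Pow_character:
  assumes "finite A"
  shows "(\<Sum>\<alpha>\<in>Pow A. (-1::real) ^ card (\<alpha> \<inter> z)) = (if A \<inter> z = {} then 2 ^ card A else 0)"
  using assms
proof (induction A rule: finite_induct)
  case empty
  then show ?case by simp
next
  case (insert a A)
  have sign: "(-1::real) ^ card (insert a \<alpha> \<inter> z) = (if a \<in> z then -1 else 1) * (-1) ^ card (\<alpha> \<inter> z)"
    if "\<alpha> \<in> Pow A" for \<alpha>
  proof -
    have "finite \<alpha>" "a \<notin> \<alpha>"
      using that insert.hyps finite_subset by auto
    then show ?thesis by (simp add: Int_insert_left)
  qed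
  have "inj_on (insert a) (Pow A)"
    using insert.hyps by (auto simp: inj_on_def)
  then have "(\<Sum>\<alpha>\<in>Pow (insert a A). (-1::real) ^ card (\<alpha> \<inter> z))
      = (\<Sum>\<alpha>\<in>Pow A. (-1) ^ card (\<alpha> \<inter> z)) + (\<Sum>\<alpha>\<in>Pow A. (-1) ^ card (insert a \<alpha> \<inter> z))"
    using insert.hyps unfolding Pow_insert
    by (subst sum.union_disjoint) (auto simp: sum.reindex)
  also have "\<dots> = (1 + (if a \<in> z then -1 else 1)) * (\<Sum>\<alpha>\<in>Pow A. (-1) ^ card (\<alpha> \<inter> z))"
    by (simp add: sign sum_distrib_left sum_negf)
  finally show ?case
    using insert by simp
qed

lemma character_mult:
  assumes "finite \<alpha>"
  shows "(-1::real) ^ card (\<alpha> \<inter> z) * (-1) ^ card (\<alpha> \<inter> z') = (-1) ^ card (\<alpha> \<inter> vadd z z')"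
proof -
  have "card (\<alpha> \<inter> z) + card (\<alpha> \<inter> z') = card (\<alpha> \<inter> (z \<union> z')) + card (\<alpha> \<inter> z \<inter> z')"
    using assms by (subst card_Un_Int) (auto simp: Int_Un_distrib Int_ac)
  moreover have "card (\<alpha> \<inter> (z \<union> z')) = card (\<alpha> \<inter> vadd z z') + card (\<alpha> \<inter> z \<inter> z')"
    using assms by (subst card_Un_disjoint[symmetric]) (auto simp: vadd_def intro: arg_cong[where f=card])
  ultimately have "card (\<alpha> \<inter> z) + card (\<alpha> \<inter> z') = card (\<alpha> \<inter> vadd z z') + 2 * card (\<alpha> \<inter> z \<inter> z')"
    by simp
  then show ?thesis
    by (metis (no_types) power_add power_minus1_even mult_1_right)
qed

lemma sum_cube_character_orthogonal:
  assumes "z \<in> cube n" "z' \<in> cube n"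
  shows "(\<Sum>\<alpha>\<in>cube n. (-1::real) ^ card (\<alpha> \<inter> z) * (-1) ^ card (\<alpha> \<inter> z'))
     = (if z = z' then 2 ^ n else 0)"
proof -
  have "(\<Sum>\<alpha>\<in>cube n. (-1::real) ^ card (\<alpha> \<inter> z) * (-1) ^ card (\<alpha> \<inter> z'))
      = (\<Sum>\<alpha>\<in>Pow {..<n}. (-1) ^ card (\<alpha> \<inter> vadd z z'))"
    unfolding cube_def by (intro sum.cong refl character_mult) (auto intro: finite_subset)
  also have "\<dots> = (if z = z' then 2 ^ n else 0)"
    using assms by (subst sum_Pow_character) (auto simp: cube_def vadd_def)
  finally show ?thesis .
qed

lemma parseval:
  "(\<Sum>\<alpha>\<in>cube n. (fourier n h \<alpha>)\<^sup>2) = (\<Sum>z\<in>cube n. (h z)\<^sup>2) / 2 ^ n"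
proof -
  have "(\<Sum>\<alpha>\<in>cube n. (fourier n h \<alpha>)\<^sup>2)
     = (\<Sum>\<alpha>\<in>cube n. \<Sum>z\<in>cube n. \<Sum>z'\<in>cube n.
          h z * h z' * ((-1) ^ card (\<alpha> \<inter> z) * (-1) ^ card (\<alpha> \<inter> z'))) / 4 ^ n"
    unfolding fourier_def power2_eq_square
    by (simp add: sum_product sum_divide_distrib algebra_simps power_mult_distrib[symmetric])
  also have "\<dots> = (\<Sum>z\<in>cube n. \<Sum>z'\<in>cube n. h z * h z' *
      (\<Sum>\<alpha>\<in>cube n. (-1) ^ card (\<alpha> \<inter> z) * (-1) ^ card (\<alpha> \<inter> z'))) / 4 ^ n"
    unfolding sum_distrib_left
    by (rule arg_cong[where f="\<lambda>t. t / 4 ^ n"], rule trans[OF sum.swap], rule sum.cong[OF refl], rule sum.swap)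
  also have "\<dots> = (\<Sum>z\<in>cube n. (h z)\<^sup>2 * 2 ^ n) / 4 ^ n"
    by (simp add: sum_cube_character_orthogonal if_distrib[of "(*) _"] power2_eq_square cong: if_cong)
  also have "\<dots> = (\<Sum>z\<in>cube n. (h z)\<^sup>2) / 2 ^ n"
    using power_mult_distrib[of "2::real" 2 n] by (simp add: sum_distrib_right[symmetric])
  finally show ?thesis .
qed

lemma W_nonneg [simp]: "0 \<le> W n f x \<alpha>"
  by (simp add: W_def)

lemma sum_W_eq_1:
  assumes f: "\<forall>x\<in>cube n. f x = 1 \<or> f x = -1" and x: "x \<in> cube n"
  shows "(\<Sum>\<alpha>\<in>cube n. W n f x \<alpha>) = 1"
proof -
  have "(shiftprod f x z)\<^sup>2 = 1" if "z \<in> cube n" for z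
  proof -
    have "f z = 1 \<or> f z = -1" "f (vadd z x) = 1 \<or> f (vadd z x) = -1"
      using f that x by auto
    then show ?thesis
      by (auto simp: shiftprod_def)
  qed
  then show ?thesis
    unfolding W_def parseval by (simp add: card_cube)
qed

lemma W_empty:
  assumes f: "\<forall>x\<in>cube n. f x = 1 \<or> f x = -1" and \<alpha>: "\<alpha> \<in> cube n"
  shows "W n f {} \<alpha> = of_bool (\<alpha> = {})"
proof -
  have "shiftprod f {} z = 1" if "z \<in> cube n" for z
    using f[rule_format, OF that] by (auto simp: shiftprod_def)
  then have "fourier n (shiftprod f {}) \<alpha> = (\<Sum>z\<in>Pow {..<n}. (-1) ^ card (z \<inter> \<alpha>)) / 2 ^ n"
    unfolding fourier_def by (simp add: cube_def Int_commute)
  also have "\<dots> = (if \<alpha> = {} then 1 else 0)"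
    using \<alpha> by (subst sum_Pow_character) (auto simp: cube_def)
  finally show ?thesis
    by (simp add: W_def)
qed

definition prob_PiE :: "'a set \<Rightarrow> 'b set \<Rightarrow> ('a \<Rightarrow> 'b \<Rightarrow> real) \<Rightarrow> (('a \<Rightarrow> 'b) \<Rightarrow> bool) \<Rightarrow> real" where
  "prob_PiE S C p E = (\<Sum>\<phi>\<in>S \<rightarrow>\<^sub>E C. (\<Prod>z\<in>S. p z (\<phi> z)) * of_bool (E \<phi>))"

lemma prob_PiE_nonneg:
  assumes "\<And>z v. 0 \<le> p z v"
  shows "0 \<le> prob_PiE S C p E"
  unfolding prob_PiE_def using assms by (intro sum_nonneg mult_nonneg_nonneg prod_nonneg) auto

lemma prod_of_bool: "finite S \<Longrightarrow> (\<Prod>z\<in>S. of_bool (P z)) = (of_bool (\<forall>z\<in>S. P z) :: 'a::comm_semiring_1)"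
  by (induction S rule: finite_induct) auto

lemma prob_PiE_product:
  assumes "finite S" "finite C"
  shows "prob_PiE S C p (\<lambda>\<phi>. \<forall>z\<in>S. Q z (\<phi> z)) = (\<Prod>z\<in>S. \<Sum>v\<in>{v\<in>C. Q z v}. p z v)"
proof -
  have "(\<Prod>z\<in>S. \<Sum>v\<in>{v\<in>C. Q z v}. p z v) = (\<Prod>z\<in>S. \<Sum>v\<in>C. p z v * of_bool (Q z v))"
    using assms(2) by (simp add: Collect_conj_eq Int_commute)
  also have "\<dots> = (\<Sum>\<phi>\<in>S \<rightarrow>\<^sub>E C. \<Prod>z\<in>S. p z (\<phi> z) * of_bool (Q z (\<phi> z)))"
    using assms by (rule prod_sum_PiE)
  also have "\<dots> = prob_PiE S C p (\<lambda>\<phi>. \<forall>z\<in>S. Q z (\<phi> z))"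
    unfolding prob_PiE_def using assms(1) by (simp add: prod.distrib prod_of_bool)
  finally show ?thesis ..
qed

lemma prod_list_le_prod_set:
  fixes g :: "'a \<Rightarrow> real"
  assumes "\<And>z. z \<in> set zs \<Longrightarrow> 0 \<le> g z \<and> g z \<le> 1"
  shows "prod_list (map g zs) \<le> prod g (set zs)"
  using assms
proof (induction zs)
  case Nil
  then show ?case by simp
next
  case (Cons z zs)
  have "g z * prod_list (map g zs) \<le> g z * prod g (set zs)"
    using Cons by (intro mult_left_mono) auto
  moreover have "g z * prod g (set zs) \<le> prod g (set zs)" if "z \<in> set zs"
    using Cons by (intro mult_left_le_one_le prod_nonneg) auto
  ultimately show ?case
    by (cases "z \<in> set zs") (auto simp: insert_absorb)
qed

lemma prob_PiE_ge_prod_list: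
  fixes p :: "'a \<Rightarrow> 'b \<Rightarrow> real"
  assumes S: "finite S" and C: "finite C"
    and nonneg: "\<And>z v. 0 \<le> p z v"
    and sum_eq_1: "\<And>z. z \<in> S \<Longrightarrow> (\<Sum>v\<in>C. p z v) = 1"
    and cs: "set cs \<subseteq> S \<times> C"
    and conflict: "\<And>z v v'. (z, v) \<in> set cs \<Longrightarrow> (z, v') \<in> set cs \<Longrightarrow> v \<noteq> v' \<Longrightarrow> (\<Prod>(z, v)\<leftarrow>cs. p z v) = 0"
  shows "(\<Prod>(z, v)\<leftarrow>cs. p z v) \<le> prob_PiE S C p (\<lambda>\<phi>. \<forall>(z, v)\<in>set cs. \<phi> z = v)"
proof (cases "\<exists>z v v'. (z, v) \<in> set cs \<and> (z, v') \<in> set cs \<and> v \<noteq> v'")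
  case True
  then show ?thesis
    using conflict prob_PiE_nonneg[OF nonneg] by auto
next
  case False
  define Q where "Q z v \<longleftrightarrow> (\<forall>v'. (z, v') \<in> set cs \<longrightarrow> v = v')" for z v
  define q where "q z = (\<Sum>v\<in>{v\<in>C. Q z v}. p z v)" for z
  have q_le_1: "q z \<le> 1" if "z \<in> S" for z
  proof -
    have "q z \<le> (\<Sum>v\<in>C. p z v)"
      unfolding q_def using C nonneg by (intro sum_mono2) auto
    then show ?thesis
      using sum_eq_1[OF that] by simp
  qed
  have q_nonneg: "0 \<le> q z" for z
    unfolding q_def by (simp add: nonneg sum_nonneg)
  have q_value: "q z = p z v" if "(z, v) \<in> set cs" for z v
  proof -
    have "{v'\<in>C. Q z v'} = {v}"
      using False that cs by (auto simp: Q_def)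
    then show ?thesis by (simp add: q_def)
  qed
  have q_free: "q z = 1" if "z \<in> S - fst ` set cs" for z
  proof -
    have "(z, v') \<notin> set cs" for v'
      using that by force
    then have "{v\<in>C. Q z v} = C"
      by (auto simp: Q_def)
    then show ?thesis using that sum_eq_1 by (simp add: q_def)
  qed
  have "(\<Prod>(z, v)\<leftarrow>cs. p z v) = prod_list (map q (map fst cs))"
    unfolding map_map using q_value by (intro arg_cong[where f=prod_list] map_cong) auto
  also have "\<dots> \<le> prod q (set (map fst cs))"
    using cs q_le_1 q_nonneg by (intro prod_list_le_prod_set) auto
  also have "\<dots> = (\<Prod>z\<in>S. q z)"
    using S cs q_free by (intro prod.mono_neutral_left) auto
  also have "\<dots> = prob_PiE S C p (\<lambda>\<phi>. \<forall>z\<in>S. Q z (\<phi> z))"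
    unfolding q_def using S C by (rule prob_PiE_product[symmetric])
  also have "(\<lambda>\<phi>. \<forall>z\<in>S. Q z (\<phi> z)) = (\<lambda>\<phi>. \<forall>(z, v)\<in>set cs. \<phi> z = v)"
  proof (intro ext iffI)
    fix \<phi> :: "'a \<Rightarrow> 'b"
    assume "\<forall>z\<in>S. Q z (\<phi> z)"
    then show "\<forall>(z, v)\<in>set cs. \<phi> z = v"
      using cs by (auto simp: Q_def)
  qed (auto simp: Q_def)
  finally show ?thesis .
qed

lemma prob_three_values_ge:
  assumes f: "\<forall>x\<in>cube n. f x = 1 \<or> f x = -1"
    and cube: "x \<in> cube n" "y \<in> cube n" "\<alpha> \<in> cube n" "\<beta> \<in> cube n"
  shows "W n f x \<alpha> * W n f y \<beta> * W n f (vadd x y) (vadd \<alpha> \<beta>)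
    \<le> prob_PiE (cube n) (cube n) (W n f) (\<lambda>\<phi>. \<phi> x = \<alpha> \<and> \<phi> y = \<beta> \<and> \<phi> (vadd x y) = vadd \<alpha> \<beta>)"
proof -
  define cs where "cs = [(x, \<alpha>), (y, \<beta>), (vadd x y, vadd \<alpha> \<beta>)]"
  have "(\<Prod>(z, v)\<leftarrow>cs. W n f z v) \<le> prob_PiE (cube n) (cube n) (W n f) (\<lambda>\<phi>. \<forall>(z, v)\<in>set cs. \<phi> z = v)"
  proof (rule prob_PiE_ge_prod_list)
    show "set cs \<subseteq> cube n \<times> cube n"
      using cube by (simp add: cs_def)
    \<comment> \<open>as \<open>x + y + (x + y) = 0\<close>, a repeated point forces the third one to be \<open>0\<close> with a
      nonzero prescribed value, where \<open>W\<close> vanishes\<close>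
    show "(\<Prod>(z, v)\<leftarrow>cs. W n f z v) = 0"
      if "(z, v) \<in> set cs" "(z, v') \<in> set cs" "v \<noteq> v'" for z v v'
      using that cube by (auto simp: cs_def W_empty[OF f])
  qed (use sum_W_eq_1[OF f] in auto)
  then show ?thesis
    by (simp add: cs_def mult.assoc)
qed

definition heavy :: "nat \<Rightarrow> (nat set \<Rightarrow> real) \<Rightarrow> real \<Rightarrow> nat set \<Rightarrow> nat set \<Rightarrow> nat set \<Rightarrow> nat set \<Rightarrow> bool" where
  "heavy n f \<delta> x y \<alpha> \<beta> \<longleftrightarrow> \<delta> \<le> W n f x \<alpha> \<and> \<delta> \<le> W n f y \<beta> \<and> \<delta> \<le> W n f (vadd x y) (vadd \<alpha> \<beta>)"

lemma Lphi_eq_sum: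
  "Lphi n f \<delta> \<phi> = (\<Sum>x\<in>cube n. \<Sum>y\<in>cube n.
     of_bool (vadd (\<phi> x) (\<phi> y) = \<phi> (vadd x y) \<and> heavy n f \<delta> x y (\<phi> x) (\<phi> y))) / 4 ^ n"
proof -
  define good where "good = (\<lambda>(x, y). vadd (\<phi> x) (\<phi> y) = \<phi> (vadd x y) \<and> heavy n f \<delta> x y (\<phi> x) (\<phi> y))"
  have "Lphi n f \<delta> \<phi> = real (card (cube n \<times> cube n \<inter> {p. good p})) / 4 ^ n"
    unfolding Lphi_def good_def heavy_def by (rule arg_cong[where f="\<lambda>A. real (card A) / 4 ^ n"]) auto
  also have "\<dots> = (\<Sum>p\<in>cube n \<times> cube n. of_bool (good p)) / 4 ^ n"
    by simp
  also have "\<dots> = (\<Sum>x\<in>cube n. \<Sum>y\<in>cube n. of_bool (good (x, y))) / 4 ^ n"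
    by (simp only: sum.cartesian_product')
  finally show ?thesis
    by (simp add: good_def)
qed

lemma of_bool_eq_sum_values:
  assumes "finite C" "a \<in> C" "b \<in> C"
  shows "of_bool (P a b) = (\<Sum>\<alpha>\<in>C. \<Sum>\<beta>\<in>C. of_bool (P \<alpha> \<beta>) * of_bool (a = \<alpha> \<and> b = \<beta>) :: 'c::comm_semiring_1)"
proof -
  have "(\<Sum>\<alpha>\<in>C. \<Sum>\<beta>\<in>C. of_bool (P \<alpha> \<beta>) * of_bool (a = \<alpha> \<and> b = \<beta>))
      = (\<Sum>\<alpha>\<in>C. \<Sum>\<beta>\<in>C. if \<alpha> = a then if \<beta> = b then of_bool (P a b) else 0 else (0::'c))"
    by (intro sum.cong refl) auto
  also have "\<dots> = (\<Sum>\<alpha>\<in>C. if \<alpha> = a then \<Sum>\<beta>\<in>C. if \<beta> = b then of_bool (P a b) else 0 else (0::'c))"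
    by (intro sum.cong refl) auto
  finally show ?thesis
    using assms by simp
qed

lemma ELphi_eq_sum_prob:
  "ELphi n f \<delta> = (\<Sum>x\<in>cube n. \<Sum>y\<in>cube n. \<Sum>\<alpha>\<in>cube n. \<Sum>\<beta>\<in>cube n. of_bool (heavy n f \<delta> x y \<alpha> \<beta>) *
     prob_PiE (cube n) (cube n) (W n f) (\<lambda>\<phi>. \<phi> x = \<alpha> \<and> \<phi> y = \<beta> \<and> \<phi> (vadd x y) = vadd \<alpha> \<beta>)) / 4 ^ n"
proof -
  define C where "C = cube n"
  define P where "P \<phi> = (\<Prod>z\<in>C. W n f z (\<phi> z))" for \<phi>
  define h where "h x y \<alpha> \<beta> = (of_bool (heavy n f \<delta> x y \<alpha> \<beta>) :: real)" for x y \<alpha> \<beta>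
  define I where "I x y \<alpha> \<beta> \<phi> = (of_bool (\<phi> x = \<alpha> \<and> \<phi> y = \<beta> \<and> \<phi> (vadd x y) = vadd \<alpha> \<beta>) :: real)"
    for x y \<alpha> \<beta> \<phi>
  have L: "Lphi n f \<delta> \<phi> = (\<Sum>x\<in>C. \<Sum>y\<in>C. \<Sum>\<alpha>\<in>C. \<Sum>\<beta>\<in>C. h x y \<alpha> \<beta> * I x y \<alpha> \<beta> \<phi>) / 4 ^ n"
    if "\<phi> \<in> C \<rightarrow>\<^sub>E C" for \<phi>
  proof -
    have "of_bool (vadd (\<phi> x) (\<phi> y) = \<phi> (vadd x y) \<and> heavy n f \<delta> x y (\<phi> x) (\<phi> y))
        = (\<Sum>\<alpha>\<in>C. \<Sum>\<beta>\<in>C. h x y \<alpha> \<beta> * I x y \<alpha> \<beta> \<phi>)"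
      if "x \<in> C" "y \<in> C" for x y
    proof -
      have "\<phi> x \<in> C" "\<phi> y \<in> C"
        using \<open>\<phi> \<in> C \<rightarrow>\<^sub>E C\<close> that by auto
      then have "of_bool (vadd (\<phi> x) (\<phi> y) = \<phi> (vadd x y) \<and> heavy n f \<delta> x y (\<phi> x) (\<phi> y))
          = (\<Sum>\<alpha>\<in>C. \<Sum>\<beta>\<in>C. of_bool (vadd \<alpha> \<beta> = \<phi> (vadd x y) \<and> heavy n f \<delta> x y \<alpha> \<beta>)
               * (of_bool (\<phi> x = \<alpha> \<and> \<phi> y = \<beta>) :: real))"
        by (intro of_bool_eq_sum_values) (simp_all add: C_def)
      also have "\<dots> = (\<Sum>\<alpha>\<in>C. \<Sum>\<beta>\<in>C. h x y \<alpha> \<beta> * I x y \<alpha> \<beta> \<phi>)"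
        by (intro sum.cong refl) (auto simp: h_def I_def)
      finally show ?thesis .
    qed
    then show ?thesis
      unfolding Lphi_eq_sum C_def[symmetric] by simp
  qed
  have "ELphi n f \<delta> = (\<Sum>\<phi>\<in>C \<rightarrow>\<^sub>E C. P \<phi> * Lphi n f \<delta> \<phi>)"
    by (simp add: ELphi_def P_def C_def)
  also have "\<dots> = (\<Sum>\<phi>\<in>C \<rightarrow>\<^sub>E C. \<Sum>x\<in>C. \<Sum>y\<in>C. \<Sum>\<alpha>\<in>C. \<Sum>\<beta>\<in>C. P \<phi> * (h x y \<alpha> \<beta> * I x y \<alpha> \<beta> \<phi>)) / 4 ^ n"
    by (simp add: L sum_distrib_left sum_divide_distrib)
  also have "\<dots> = (\<Sum>x\<in>C. \<Sum>y\<in>C. \<Sum>\<alpha>\<in>C. \<Sum>\<beta>\<in>C. \<Sum>\<phi>\<in>C \<rightarrow>\<^sub>E C. P \<phi> * (h x y \<alpha> \<beta> * I x y \<alpha> \<beta> \<phi>)) / 4 ^ n"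
    by (simp only: sum.swap[of _ "C \<rightarrow>\<^sub>E C"])
  also have "\<dots> = (\<Sum>x\<in>C. \<Sum>y\<in>C. \<Sum>\<alpha>\<in>C. \<Sum>\<beta>\<in>C. h x y \<alpha> \<beta> *
      prob_PiE C C (W n f) (\<lambda>\<phi>. \<phi> x = \<alpha> \<and> \<phi> y = \<beta> \<and> \<phi> (vadd x y) = vadd \<alpha> \<beta>)) / 4 ^ n"
    by (simp add: prob_PiE_def P_def I_def sum_distrib_left mult.left_commute)
  finally show ?thesis
    by (simp add: C_def h_def)
qed

lemma mult3_le_threshold:
  fixes a b g \<delta> :: real
  assumes "0 \<le> a" "0 \<le> b" "0 \<le> g" "0 \<le> \<delta>"
  shows "a * b * g \<le> of_bool (\<delta> \<le> a \<and> \<delta> \<le> b \<and> \<delta> \<le> g) * (a * b * g) + \<delta> * (b * g + a * g + a * b)"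
proof (cases "\<delta> \<le> a \<and> \<delta> \<le> b \<and> \<delta> \<le> g")
  case True
  then show ?thesis
    using assms by simp
next
  case False
  have "a * (b * g) \<le> \<delta> * (b * g) \<or> b * (a * g) \<le> \<delta> * (a * g) \<or> g * (a * b) \<le> \<delta> * (a * b)"
    using False assms by (auto intro: mult_right_mono)
  moreover have "0 \<le> \<delta> * (b * g)" "0 \<le> \<delta> * (a * g)" "0 \<le> \<delta> * (a * b)"
    using assms by simp_all
  ultimately have "a * b * g \<le> \<delta> * (b * g) + \<delta> * (a * g) + \<delta> * (a * b)"
    by (auto simp: ac_simps)
  then show ?thesis
    by (simp add: False distrib_left)
qed

lemma sum_W_vadd_eq_1:
  assumes "\<forall>x\<in>cube n. f x = 1 \<or> f x = -1" "x \<in> cube n" "\<beta> \<in> cube n"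
  shows "(\<Sum>\<alpha>\<in>cube n. W n f x (vadd \<alpha> \<beta>)) = 1"
  using sum_cube_vadd_shift[OF assms(3), of "W n f x"] sum_W_eq_1[OF assms(1,2)] by simp

lemma sum_heavy_triples_ge:
  assumes f: "\<forall>x\<in>cube n. f x = 1 \<or> f x = -1" and x: "x \<in> cube n" and y: "y \<in> cube n" and "0 \<le> \<delta>"
  shows "(\<Sum>\<alpha>\<in>cube n. \<Sum>\<beta>\<in>cube n. W n f x \<alpha> * W n f y \<beta> * W n f (vadd x y) (vadd \<alpha> \<beta>)) - 3 * \<delta>
    \<le> (\<Sum>\<alpha>\<in>cube n. \<Sum>\<beta>\<in>cube n. of_bool (heavy n f \<delta> x y \<alpha> \<beta>) *
          (W n f x \<alpha> * W n f y \<beta> * W n f (vadd x y) (vadd \<alpha> \<beta>)))"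
proof -
  define s where "s = vadd x y"
  have s: "s \<in> cube n"
    using x y by (simp add: s_def)
  have marginal_1: "(\<Sum>\<alpha>\<in>cube n. \<Sum>\<beta>\<in>cube n. W n f y \<beta> * W n f s (vadd \<alpha> \<beta>)) = 1"
    using sum_W_vadd_eq_1[OF f s] sum_W_eq_1[OF f y]
    by (subst sum.swap) (simp add: sum_distrib_left[symmetric])
  have "(\<Sum>\<beta>\<in>cube n. W n f s (vadd \<alpha> \<beta>)) = 1" if "\<alpha> \<in> cube n" for \<alpha>
    using sum_W_vadd_eq_1[OF f s that] by (simp only: vadd_commute[of \<alpha>])
  then have marginal_2: "(\<Sum>\<alpha>\<in>cube n. \<Sum>\<beta>\<in>cube n. W n f x \<alpha> * W n f s (vadd \<alpha> \<beta>)) = 1"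
    using sum_W_eq_1[OF f x] by (simp add: sum_distrib_left[symmetric])
  have marginal_3: "(\<Sum>\<alpha>\<in>cube n. \<Sum>\<beta>\<in>cube n. W n f x \<alpha> * W n f y \<beta>) = 1"
    using sum_W_eq_1[OF f x] sum_W_eq_1[OF f y] by (simp add: sum_product[symmetric])
  have "(\<Sum>\<alpha>\<in>cube n. \<Sum>\<beta>\<in>cube n. W n f x \<alpha> * W n f y \<beta> * W n f s (vadd \<alpha> \<beta>))
      \<le> (\<Sum>\<alpha>\<in>cube n. \<Sum>\<beta>\<in>cube n. of_bool (heavy n f \<delta> x y \<alpha> \<beta>) * (W n f x \<alpha> * W n f y \<beta> * W n f s (vadd \<alpha> \<beta>))
          + \<delta> * (W n f y \<beta> * W n f s (vadd \<alpha> \<beta>) + W n f x \<alpha> * W n f s (vadd \<alpha> \<beta>) + W n f x \<alpha> * W n f y \<beta>))"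
    using \<open>0 \<le> \<delta>\<close> unfolding heavy_def s_def by (intro sum_mono mult3_le_threshold) auto
  also have "\<dots> = (\<Sum>\<alpha>\<in>cube n. \<Sum>\<beta>\<in>cube n. of_bool (heavy n f \<delta> x y \<alpha> \<beta>) * (W n f x \<alpha> * W n f y \<beta> * W n f s (vadd \<alpha> \<beta>)))
      + \<delta> * ((\<Sum>\<alpha>\<in>cube n. \<Sum>\<beta>\<in>cube n. W n f y \<beta> * W n f s (vadd \<alpha> \<beta>))
        + (\<Sum>\<alpha>\<in>cube n. \<Sum>\<beta>\<in>cube n. W n f x \<alpha> * W n f s (vadd \<alpha> \<beta>))
        + (\<Sum>\<alpha>\<in>cube n. \<Sum>\<beta>\<in>cube n. W n f x \<alpha> * W n f y \<beta>))"
    by (simp add: sum.distrib sum_distrib_left distrib_left)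
  also have "\<dots> = (\<Sum>\<alpha>\<in>cube n. \<Sum>\<beta>\<in>cube n. of_bool (heavy n f \<delta> x y \<alpha> \<beta>) * (W n f x \<alpha> * W n f y \<beta> * W n f s (vadd \<alpha> \<beta>)))
      + 3 * \<delta>"
    by (simp add: marginal_1 marginal_2 marginal_3)
  finally show ?thesis
    by (simp add: s_def)
qed

lemma eta_nonneg: "0 \<le> eta n f"
  unfolding eta_def by (intro divide_nonneg_pos sum_nonneg mult_nonneg_nonneg W_nonneg) auto

lemma eta_minus_le_ELphi:
  assumes f: "\<forall>x\<in>cube n. f x = 1 \<or> f x = -1" and "0 \<le> \<delta>"
  shows "eta n f - 3 * \<delta> \<le> ELphi n f \<delta>"
proof -
  let ?T = "\<lambda>x y \<alpha> \<beta>. W n f x \<alpha> * W n f y \<beta> * W n f (vadd x y) (vadd \<alpha> \<beta>)"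
  have "(4::real) ^ n = 2 ^ n * 2 ^ n"
    by (simp flip: power_mult_distrib)
  then have "eta n f - 3 * \<delta> = (\<Sum>x\<in>cube n. \<Sum>y\<in>cube n. (\<Sum>\<alpha>\<in>cube n. \<Sum>\<beta>\<in>cube n. ?T x y \<alpha> \<beta>) - 3 * \<delta>) / 4 ^ n"
    by (simp add: eta_def sum_subtractf card_cube diff_divide_distrib)
  also have "\<dots> \<le> (\<Sum>x\<in>cube n. \<Sum>y\<in>cube n. \<Sum>\<alpha>\<in>cube n. \<Sum>\<beta>\<in>cube n.
      of_bool (heavy n f \<delta> x y \<alpha> \<beta>) * ?T x y \<alpha> \<beta>) / 4 ^ n"
    using sum_heavy_triples_ge[OF f _ _ \<open>0 \<le> \<delta>\<close>] by (intro divide_right_mono sum_mono) auto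
  also have "\<dots> \<le> ELphi n f \<delta>"
    unfolding ELphi_eq_sum_prob using prob_three_values_ge[OF f]
    by (intro divide_right_mono sum_mono mult_left_mono) auto
  finally show ?thesis .
qed

theorem lemma6p7:
  fixes n :: nat and f :: "nat set \<Rightarrow> real"
  assumes "\<forall>x\<in>cube n. f x = 1 \<or> f x = -1"
  shows "ELphi n f (eta n f / 6) \<ge> eta n f / 2"
  using eta_minus_le_ELphi[OF assms, of "eta n f / 6"] eta_nonneg[of n f] by simp

end
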